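(* Let $i,j,k$ be the three elements of $\{1,2,3\}$ in any order, and let $\ell:\mathbb{R}^3\to\mathbb{R}$ be a linear functional with $\partial\ell/\partial\xi_k\neq0$. Then there is $C<\infty$ depending on $\ell$ such that for all nonnegative measurable functions $G$ on $\mathbb{R}^2$ and $g_1,g_2,g_3$ on $\mathbb{R}$, and all measurable sets $E\subset\mathbb{R}$ and $S\subset\mathbb{R}^3$, \[ \int_{\mathbb{R}^3}\prod_{n=1}^3g_n(\xi_n)\,G(\xi_1-\xi_2+\xi_3,\ \xi_1^2-\xi_2^2+\xi_3^2)\,\chi_S(\xi)\chi_E(\ell(\xi))\,d\xi_1\,d\xi_2\,d\xi_3\le C\|G\|_{L^2}\prod_{n=1}^3\|g_n\|_{L^2}\,|E|^{1/2}\Big(\min_{\xi\in S}|\xi_i-\xi_j|\Big)^{-1/2}. \]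
   Context: Here $\xi=(\xi_1,\xi_2,\xi_3)$; the set $S$ may equivalently be viewed as a subset of the hyperplane $\{\xi_1-\xi_2+\xi_3-\xi_4=0\}\subset\mathbb{R}^4$ via $\xi_4=\xi_1-\xi_2+\xi_3$. $\chi$ denotes indicator functions and $|E|$ Lebesgue measure. *)

theory Defs
  imports "HOL-Analysis.Analysis"
begin

definition esqrt :: "ennreal \<Rightarrow> ennreal" where
  "esqrt x = (if x = top then top else ennreal (sqrt (enn2real x)))"

definition L2norm :: "('a::euclidean_space \<Rightarrow> ennreal) \<Rightarrow> ennreal" where
  "L2norm f = esqrt (\<integral>\<^sup>+ x. (f x)\<^sup>2 \<partial>lebesgue)"

end

theory Submission
  imports Defs
begin

(* Write the integrand as F * K with F = g_i(xi_i) g_j(xi_j) 1_E(l xi) and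
   K = g_k(xi_k) G(Phi xi) 1_S(xi), where Phi xi = (xi_1 - xi_2 + xi_3, xi_1^2 - xi_2^2 + xi_3^2),
   and apply Cauchy-Schwarz. Integrating F^2 first in xi_k, on which l depends with slope
   l(e_k) <> 0, gives |l(e_k)|^-1 |g_i|^2 |g_j|^2 |E|. For K^2 fix xi_k: the map
   (xi_i, xi_j) |-> Phi xi is a sum or a difference of two squares, with Jacobian 2 |xi_i - xi_j|,
   so on the strip |xi_i - xi_j| >= r, which contains S for r = inf_S |xi_i - xi_j|, the change of
   variables bounds the integral by r^-1 |g_k|^2 |G|^2. Lebesgue measurable data are first
   replaced by Borel majorants with the same L2 norms. *)

section \<open>Changes of variables on the line and in the plane\<close>

lemma nn_integral_indicator_incseq_SUP:
  assumes [measurable]: "f \<in> borel_measurable M" and "incseq A" and "range A \<subseteq> sets M"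
  shows "(SUP n. \<integral>\<^sup>+x. f x * indicator (A n) x \<partial>M) = (\<integral>\<^sup>+x. f x * indicator (\<Union>n. A n) x \<partial>M)"
proof -
  have "(SUP n. emeasure (density M f) (A n)) = emeasure (density M f) (\<Union>n. A n)"
    using assms by (intro SUP_emeasure_incseq) auto
  moreover have "(\<Union>n. A n) \<in> sets M"
    using assms by auto
  ultimately show ?thesis
    using assms by (simp add: emeasure_density subset_eq)
qed

lemma nn_integral_lborel_affine:
  fixes f :: "real \<Rightarrow> ennreal"
  assumes [measurable]: "f \<in> borel_measurable borel" and "c \<noteq> 0"
  shows "(\<integral>\<^sup>+x. f (t + c * x) \<partial>lborel) = ennreal (1 / \<bar>c\<bar>) * (\<integral>\<^sup>+x. f x \<partial>lborel)"
proof -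
  have "ennreal (1 / \<bar>c\<bar>) * (\<integral>\<^sup>+x. f x \<partial>lborel)
      = ennreal (1 / \<bar>c\<bar>) * ennreal \<bar>c\<bar> * (\<integral>\<^sup>+x. f (t + c * x) \<partial>lborel)"
    using nn_integral_real_affine[of f c t] assms by (simp add: mult.assoc)
  also have "ennreal (1 / \<bar>c\<bar>) * ennreal \<bar>c\<bar> = 1"
    using assms by (simp add: ennreal_mult[symmetric] del: ennreal_mult')
  finally show ?thesis by simp
qed

lemma nn_integral_square_substitution_Icc_le:
  fixes f :: "real \<Rightarrow> ennreal"
  assumes [measurable]: "f \<in> borel_measurable borel" and "c > 0" "a > 0" "a < b"
  shows "(\<integral>\<^sup>+w. f (c * w\<^sup>2) * indicator {a..b} w \<partial>lborel)
    \<le> ennreal (1 / (2 * c * a)) * (\<integral>\<^sup>+s. f s \<partial>lborel)"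
proof -
  have "(\<integral>\<^sup>+w. f (c * w\<^sup>2) * indicator {a..b} w \<partial>lborel)
      \<le> (\<integral>\<^sup>+w. ennreal (1 / (2 * c * a)) * (f (c * w\<^sup>2) * ennreal (2 * c * w) * indicator {a..b} w) \<partial>lborel)"
  proof (intro nn_integral_mono)
    fix w
    show "f (c * w\<^sup>2) * indicator {a..b} w
      \<le> ennreal (1 / (2 * c * a)) * (f (c * w\<^sup>2) * ennreal (2 * c * w) * indicator {a..b} w)"
    proof (cases "w \<in> {a..b}")
      case True
      then have "1 \<le> ennreal (1 / (2 * c * a)) * ennreal (2 * c * w)"
        using assms by (simp add: ennreal_mult[symmetric] field_simps del: ennreal_mult')
      from mult_left_mono[OF this, of "f (c * w\<^sup>2)"] True show ?thesis
        by (simp add: mult_ac)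
    qed simp
  qed
  also have "\<dots> = ennreal (1 / (2 * c * a)) * (\<integral>\<^sup>+s. f s * indicator {c * a\<^sup>2..c * b\<^sup>2} s \<partial>lborel)"
  proof -
    have "((\<lambda>w. c * w\<^sup>2) has_real_derivative 2 * c * w) (at w)" for w
      by (auto intro!: derivative_eq_intros)
    then show ?thesis
      using nn_integral_substitution_aux[of f a b "\<lambda>w. c * w\<^sup>2" "\<lambda>w. 2 * c * w"] assms
      by (auto simp: nn_integral_cmult intro: continuous_intros)
  qed
  also have "\<dots> \<le> ennreal (1 / (2 * c * a)) * (\<integral>\<^sup>+s. f s \<partial>lborel)"
    by (intro mult_left_mono nn_integral_mono) (auto simp: indicator_def)
  finally show ?thesis .
qed

lemma nn_integral_square_substitution_Ici_le:
  fixes f :: "real \<Rightarrow> ennreal"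
  assumes [measurable]: "f \<in> borel_measurable borel" and "c > 0" "a > 0"
  shows "(\<integral>\<^sup>+w. f (c * w\<^sup>2) * indicator {a..} w \<partial>lborel)
    \<le> ennreal (1 / (2 * c * a)) * (\<integral>\<^sup>+s. f s \<partial>lborel)"
proof -
  have "{a..} = (\<Union>n. {a..a + Suc n})"
  proof (intro equalityI subsetI)
    fix w assume "w \<in> {a..}"
    moreover obtain n where "w - a \<le> real n"
      using real_arch_simple by blast
    ultimately show "w \<in> (\<Union>n. {a..a + Suc n})"
      by (auto intro!: exI[of _ n])
  qed auto
  moreover have "incseq (\<lambda>n. {a..a + real (Suc n)})"
    by (auto simp: incseq_def)
  ultimately have "(\<integral>\<^sup>+w. f (c * w\<^sup>2) * indicator {a..} w \<partial>lborel)
      = (SUP n. \<integral>\<^sup>+w. f (c * w\<^sup>2) * indicator {a..a + Suc n} w \<partial>lborel)"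
    using nn_integral_indicator_incseq_SUP[of "\<lambda>w. f (c * w\<^sup>2)" lborel "\<lambda>n. {a..a + Suc n}"]
    by (auto simp: image_subset_iff)
  also have "\<dots> \<le> ennreal (1 / (2 * c * a)) * (\<integral>\<^sup>+s. f s \<partial>lborel)"
    using assms by (intro SUP_least nn_integral_square_substitution_Icc_le) auto
  finally show ?thesis .
qed

lemma nn_integral_square_substitution_le:
  fixes f :: "real \<Rightarrow> ennreal"
  assumes [measurable]: "f \<in> borel_measurable borel" and "c > 0" "a > 0"
  shows "(\<integral>\<^sup>+w. f (c * w\<^sup>2) * indicator {w. a \<le> \<bar>w\<bar>} w \<partial>lborel)
    \<le> ennreal (1 / (c * a)) * (\<integral>\<^sup>+s. f s \<partial>lborel)"
proof -
  let ?h = "\<lambda>w. f (c * w\<^sup>2) * indicator {a..} w"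
  have "(\<integral>\<^sup>+w. f (c * w\<^sup>2) * indicator {w. a \<le> \<bar>w\<bar>} w \<partial>lborel) = (\<integral>\<^sup>+w. ?h w + ?h (- w) \<partial>lborel)"
    using \<open>a > 0\<close> by (intro nn_integral_cong) (auto simp: indicator_def)
  also have "\<dots> = (\<integral>\<^sup>+w. ?h w \<partial>lborel) + (\<integral>\<^sup>+w. ?h (- w) \<partial>lborel)"
    by (rule nn_integral_add) auto
  also have "(\<integral>\<^sup>+w. ?h (- w) \<partial>lborel) = (\<integral>\<^sup>+w. ?h w \<partial>lborel)"
    using nn_integral_lborel_affine[of ?h "-1" 0] by simp
  also have "(\<integral>\<^sup>+w. ?h w \<partial>lborel) + (\<integral>\<^sup>+w. ?h w \<partial>lborel)
      \<le> ennreal (1 / (2 * c * a)) * (\<integral>\<^sup>+s. f s \<partial>lborel) + ennreal (1 / (2 * c * a)) * (\<integral>\<^sup>+s. f s \<partial>lborel)"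
    by (intro add_mono nn_integral_square_substitution_Ici_le assms)
  also have "\<dots> = (ennreal (1 / (2 * c * a)) + ennreal (1 / (2 * c * a))) * (\<integral>\<^sup>+s. f s \<partial>lborel)"
    by (simp add: distrib_right)
  also have "ennreal (1 / (2 * c * a)) + ennreal (1 / (2 * c * a)) = ennreal (1 / (c * a))"
    using assms by (simp add: ennreal_plus[symmetric] del: ennreal_plus)
  finally show ?thesis .
qed

lemma nn_integral_lborel_pair:
  fixes f :: "'a::euclidean_space \<times> 'b::euclidean_space \<Rightarrow> ennreal"
  assumes "f \<in> borel_measurable (lborel \<Otimes>\<^sub>M lborel)"
  shows "(\<integral>\<^sup>+z. f z \<partial>lborel) = (\<integral>\<^sup>+x. \<integral>\<^sup>+y. f (x, y) \<partial>lborel \<partial>lborel)"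
  using assms by (subst lborel_prod[symmetric]) (simp add: lborel.nn_integral_fst)

lemma nn_integral_lborel_pair_affine_fst:
  fixes H :: "real \<times> real \<Rightarrow> ennreal"
  assumes [measurable]: "H \<in> borel_measurable borel" and "c \<noteq> 0"
  shows "(\<integral>\<^sup>+u. \<integral>\<^sup>+s. H (t + c * u, s) \<partial>lborel \<partial>lborel) = ennreal (1 / \<bar>c\<bar>) * (\<integral>\<^sup>+z. H z \<partial>lborel)"
proof -
  have "(\<lambda>u. \<integral>\<^sup>+s. H (u, s) \<partial>lborel) \<in> borel_measurable borel"
    using lborel.borel_measurable_nn_integral_fst[of H lborel] by (simp add: lborel_prod)
  then show ?thesis
    using nn_integral_lborel_affine[of "\<lambda>u. \<integral>\<^sup>+s. H (u, s) \<partial>lborel" c t] assms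
    by (simp add: nn_integral_lborel_pair[of H] lborel_prod)
qed

lemma nn_integral_difference_of_squares_le:
  fixes H :: "real \<times> real \<Rightarrow> ennreal"
  assumes [measurable]: "H \<in> borel_measurable borel" and "\<bar>\<sigma>\<bar> = 1" "r > 0"
  shows "(\<integral>\<^sup>+x. \<integral>\<^sup>+y. H (p + \<sigma> * (x - y), q + \<sigma> * (x\<^sup>2 - y\<^sup>2)) * indicator {t. r \<le> \<bar>t\<bar>} (x - y) \<partial>lborel \<partial>lborel)
    \<le> ennreal (1 / (2 * r)) * (\<integral>\<^sup>+z. H z \<partial>lborel)"
proof -
  \<comment> \<open>After \<open>y = x - u\<close> the second coordinate is affine in \<open>x\<close>, with slope \<open>2 * \<sigma> * u\<close>.\<close>
  let ?K = "\<lambda>u x. H (p + \<sigma> * u, (q - \<sigma> * u\<^sup>2) + (2 * \<sigma> * u) * x) * indicator {t. r \<le> \<bar>t\<bar>} u"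
  have "(\<integral>\<^sup>+x. \<integral>\<^sup>+y. H (p + \<sigma> * (x - y), q + \<sigma> * (x\<^sup>2 - y\<^sup>2)) * indicator {t. r \<le> \<bar>t\<bar>} (x - y) \<partial>lborel \<partial>lborel)
      = (\<integral>\<^sup>+x. \<integral>\<^sup>+u. ?K u x \<partial>lborel \<partial>lborel)"
  proof (rule nn_integral_cong)
    fix x
    show "(\<integral>\<^sup>+y. H (p + \<sigma> * (x - y), q + \<sigma> * (x\<^sup>2 - y\<^sup>2)) * indicator {t. r \<le> \<bar>t\<bar>} (x - y) \<partial>lborel)
        = (\<integral>\<^sup>+u. ?K u x \<partial>lborel)"
      using nn_integral_lborel_affine[of "\<lambda>y. H (p + \<sigma> * (x - y), q + \<sigma> * (x\<^sup>2 - y\<^sup>2)) * indicator {t. r \<le> \<bar>t\<bar>} (x - y)" "-1" x]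
      by (simp add: algebra_simps power2_eq_square)
  qed
  also have "\<dots> = (\<integral>\<^sup>+u. \<integral>\<^sup>+x. ?K u x \<partial>lborel \<partial>lborel)"
    by (rule lborel_pair.Fubini'[symmetric]) (unfold case_prod_beta, measurable)
  also have "\<dots> \<le> (\<integral>\<^sup>+u. ennreal (1 / (2 * r)) * (\<integral>\<^sup>+s. H (p + \<sigma> * u, s) \<partial>lborel) \<partial>lborel)"
  proof (intro nn_integral_mono)
    fix u
    show "(\<integral>\<^sup>+x. ?K u x \<partial>lborel) \<le> ennreal (1 / (2 * r)) * (\<integral>\<^sup>+s. H (p + \<sigma> * u, s) \<partial>lborel)"
    proof (cases "r \<le> \<bar>u\<bar>")
      case True
      with assms have "u \<noteq> 0" "\<sigma> \<noteq> 0"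
        by auto
      then have "(\<integral>\<^sup>+x. ?K u x \<partial>lborel) = ennreal (1 / \<bar>2 * \<sigma> * u\<bar>) * (\<integral>\<^sup>+s. H (p + \<sigma> * u, s) \<partial>lborel)"
        using True nn_integral_lborel_affine[of "\<lambda>s. H (p + \<sigma> * u, s)" "2 * \<sigma> * u" "q - \<sigma> * u\<^sup>2"]
        by simp
      also have "\<dots> \<le> ennreal (1 / (2 * r)) * (\<integral>\<^sup>+s. H (p + \<sigma> * u, s) \<partial>lborel)"
        using True assms by (intro mult_right_mono ennreal_leI) (auto simp: abs_mult frac_le)
      finally show ?thesis .
    qed simp
  qed
  also have "\<dots> = ennreal (1 / (2 * r)) * (\<integral>\<^sup>+z. H z \<partial>lborel)"
    using nn_integral_lborel_pair_affine_fst[of H \<sigma> p] assms by (simp add: nn_integral_cmult)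
  finally show ?thesis .
qed

lemma nn_integral_sum_of_squares_le:
  fixes H :: "real \<times> real \<Rightarrow> ennreal"
  assumes [measurable]: "H \<in> borel_measurable borel" and "r > 0"
  shows "(\<integral>\<^sup>+x. \<integral>\<^sup>+y. H (p + (x + y), q + (x\<^sup>2 + y\<^sup>2)) * indicator {t. r \<le> \<bar>t\<bar>} (x - y) \<partial>lborel \<partial>lborel)
    \<le> ennreal (1 / r) * (\<integral>\<^sup>+z. H z \<partial>lborel)"
proof -
  \<comment> \<open>After \<open>y = u - x\<close> and \<open>x = u / 2 + w\<close>: \<open>x\<^sup>2 + y\<^sup>2 = u\<^sup>2 / 2 + 2 * w\<^sup>2\<close> and \<open>x - y = 2 * w\<close>.\<close>
  let ?K = "\<lambda>u x. H (p + u, q + (x\<^sup>2 + (u - x)\<^sup>2)) * indicator {t. r \<le> \<bar>t\<bar>} (2 * x - u)"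
  have "(\<integral>\<^sup>+x. \<integral>\<^sup>+y. H (p + (x + y), q + (x\<^sup>2 + y\<^sup>2)) * indicator {t. r \<le> \<bar>t\<bar>} (x - y) \<partial>lborel \<partial>lborel)
      = (\<integral>\<^sup>+x. \<integral>\<^sup>+u. ?K u x \<partial>lborel \<partial>lborel)"
  proof (rule nn_integral_cong)
    fix x
    show "(\<integral>\<^sup>+y. H (p + (x + y), q + (x\<^sup>2 + y\<^sup>2)) * indicator {t. r \<le> \<bar>t\<bar>} (x - y) \<partial>lborel)
        = (\<integral>\<^sup>+u. ?K u x \<partial>lborel)"
      using nn_integral_lborel_affine[of "\<lambda>y. H (p + (x + y), q + (x\<^sup>2 + y\<^sup>2)) * indicator {t. r \<le> \<bar>t\<bar>} (x - y)" 1 "- x"]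
      by (simp add: algebra_simps)
  qed
  also have "\<dots> = (\<integral>\<^sup>+u. \<integral>\<^sup>+x. ?K u x \<partial>lborel \<partial>lborel)"
    by (rule lborel_pair.Fubini'[symmetric]) (unfold case_prod_beta, measurable)
  also have "\<dots> \<le> (\<integral>\<^sup>+u. ennreal (1 / r) * (\<integral>\<^sup>+s. H (p + u, s) \<partial>lborel) \<partial>lborel)"
  proof (intro nn_integral_mono)
    fix u
    have "(\<integral>\<^sup>+x. ?K u x \<partial>lborel)
        = (\<integral>\<^sup>+w. H (p + u, (q + u\<^sup>2 / 2) + 2 * w\<^sup>2) * indicator {w. r / 2 \<le> \<bar>w\<bar>} w \<partial>lborel)"
      using nn_integral_lborel_affine[of "?K u" 1 "u / 2"]
      by (simp add: algebra_simps power2_eq_square indicator_def abs_mult)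
    also have "\<dots> \<le> ennreal (1 / r) * (\<integral>\<^sup>+s. H (p + u, (q + u\<^sup>2 / 2) + s) \<partial>lborel)"
      using nn_integral_square_substitution_le[of "\<lambda>s. H (p + u, (q + u\<^sup>2 / 2) + s)" 2 "r / 2"] assms
      by simp
    also have "\<dots> = ennreal (1 / r) * (\<integral>\<^sup>+s. H (p + u, s) \<partial>lborel)"
      using nn_integral_lborel_affine[of "\<lambda>s. H (p + u, s)" 1 "q + u\<^sup>2 / 2"] by simp
    finally show "(\<integral>\<^sup>+x. ?K u x \<partial>lborel) \<le> ennreal (1 / r) * (\<integral>\<^sup>+s. H (p + u, s) \<partial>lborel)" .
  qed
  also have "\<dots> = ennreal (1 / r) * (\<integral>\<^sup>+z. H z \<partial>lborel)"
    using nn_integral_lborel_pair_affine_fst[of H 1 p] by (simp add: nn_integral_cmult)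
  finally show ?thesis .
qed

section \<open>Iterated integrals on \<open>\<real>\<^sup>3\<close>\<close>

lemma UNIV_3_distinct:
  fixes a b c :: 3
  assumes "a \<noteq> b" "b \<noteq> c" "a \<noteq> c"
  shows "UNIV = {a, b, c}"
  using assms by (intro card_subset_eq[symmetric]) (auto simp: card_insert_if)

lemma prod_UNIV_3_distinct:
  fixes f :: "3 \<Rightarrow> 'a::comm_monoid_mult"
  assumes "a \<noteq> b" "b \<noteq> c" "a \<noteq> c"
  shows "(\<Prod>n\<in>UNIV. f n) = f a * f b * f c"
  using assms by (simp add: UNIV_3_distinct[OF assms] mult.assoc)

lemma emeasure_lborel_Times:
  fixes A :: "'a::euclidean_space set" and B :: "'b::euclidean_space set"
  assumes "A \<in> sets borel" "B \<in> sets borel"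
  shows "emeasure lborel (A \<times> B) = emeasure lborel A * emeasure lborel B"
  using assms by (subst lborel_prod[symmetric]) (simp add: lborel.emeasure_pair_measure_Times)

definition vec3 :: "3 \<Rightarrow> 3 \<Rightarrow> 3 \<Rightarrow> real \<Rightarrow> real \<Rightarrow> real \<Rightarrow> real^3" where
  "vec3 a b c x y z = x *\<^sub>R axis a 1 + y *\<^sub>R axis b 1 + z *\<^sub>R axis c 1"

lemma vec3_nth:
  assumes "a \<noteq> b" "b \<noteq> c" "a \<noteq> c"
  shows "vec3 a b c x y z $ a = x" "vec3 a b c x y z $ b = y" "vec3 a b c x y z $ c = z"
  using assms by (auto simp: vec3_def axis_def)

lemma measurable_vec3[measurable (raw)]:
  assumes "f \<in> borel_measurable M" "g \<in> borel_measurable M" "h \<in> borel_measurable M"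
  shows "(\<lambda>t. vec3 a b c (f t) (g t) (h t)) \<in> borel_measurable M"
  unfolding vec3_def using assms by measurable

lemma borel_measurable_vec3_uncurried[measurable]:
  "(\<lambda>(x, y, z). vec3 a b c x y z) \<in> borel_measurable (borel :: (real \<times> real \<times> real) measure)"
proof -
  have "(\<lambda>(x, y, z). vec3 a b c x y z) \<in> borel_measurable (borel \<Otimes>\<^sub>M borel \<Otimes>\<^sub>M borel)"
    unfolding case_prod_beta by measurable
  then show ?thesis
    by (simp add: borel_prod)
qed

lemma distr_lborel_vec3:
  assumes "a \<noteq> b" "b \<noteq> c" "a \<noteq> c"
  shows "distr (lborel :: (real \<times> real \<times> real) measure) borel (\<lambda>(x, y, z). vec3 a b c x y z) = lborel"
proof (rule lborel_eqI[symmetric])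
  fix l u :: "real^3"
  assume lu: "\<And>v. v \<in> Basis \<Longrightarrow> l \<bullet> v \<le> u \<bullet> v"
  have le: "l $ n \<le> u $ n" for n
    using lu[of "axis n 1"] by (auto simp: Basis_vec_def inner_axis)
  have all3: "(\<forall>n. P n) \<longleftrightarrow> P a \<and> P b \<and> P c" for P
    using UNIV_3_distinct[OF assms] by (metis UNIV_I empty_iff insertE)
  have "(\<lambda>(x, y, z). vec3 a b c x y z) -` box l u
      = {l$a<..<u$a} \<times> {l$b<..<u$b} \<times> {l$c<..<u$c}"
    by (auto simp: mem_box_cart all3 vec3_nth[OF assms])
  then have "emeasure (distr lborel borel (\<lambda>(x, y, z). vec3 a b c x y z)) (box l u)
      = emeasure lborel ({l$a<..<u$a} \<times> {l$b<..<u$b} \<times> {l$c<..<u$c})"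
    by (subst emeasure_distr) auto
  also have "\<dots> = ennreal ((u$a - l$a) * (u$b - l$b) * (u$c - l$c))"
    using le by (simp add: emeasure_lborel_Times open_Times borel_open ennreal_mult mult.assoc)
  also have "(u$a - l$a) * (u$b - l$b) * (u$c - l$c) = (\<Prod>v\<in>Basis. (u - l) \<bullet> v)"
    by (simp add: Basis_vec_def prod.UNION_disjoint inner_axis prod.reindex inj_on_def axis_eq_axis
        prod_UNIV_3_distinct[OF assms])
  finally show "emeasure (distr lborel borel (\<lambda>(x, y, z). vec3 a b c x y z)) (box l u)
      = ennreal (\<Prod>v\<in>Basis. (u - l) \<bullet> v)" .
qed simp

lemma nn_integral_lborel_vec3:
  fixes f :: "real^3 \<Rightarrow> ennreal"
  assumes "a \<noteq> b" "b \<noteq> c" "a \<noteq> c" and [measurable]: "f \<in> borel_measurable borel"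
  shows "(\<integral>\<^sup>+\<xi>. f \<xi> \<partial>lborel) = (\<integral>\<^sup>+x. \<integral>\<^sup>+y. \<integral>\<^sup>+z. f (vec3 a b c x y z) \<partial>lborel \<partial>lborel \<partial>lborel)"
proof -
  have "(\<integral>\<^sup>+\<xi>. f \<xi> \<partial>lborel) = (\<integral>\<^sup>+p. f (case p of (x, y, z) \<Rightarrow> vec3 a b c x y z) \<partial>lborel)"
    by (subst distr_lborel_vec3[OF assms(1-3), symmetric]) (simp add: nn_integral_distr)
  also have "\<dots> = (\<integral>\<^sup>+x. \<integral>\<^sup>+q. f (vec3 a b c x (fst q) (snd q)) \<partial>lborel \<partial>lborel)"
  proof (subst nn_integral_lborel_pair)
    show "(\<lambda>p. f (case p of (x, y, z) \<Rightarrow> vec3 a b c x y z)) \<in> borel_measurable (lborel \<Otimes>\<^sub>M lborel)"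
      unfolding lborel_prod by measurable
  qed (simp add: case_prod_beta)
  also have "\<dots> = (\<integral>\<^sup>+x. \<integral>\<^sup>+y. \<integral>\<^sup>+z. f (vec3 a b c x y z) \<partial>lborel \<partial>lborel \<partial>lborel)"
    by (rule nn_integral_cong, subst nn_integral_lborel_pair) simp_all
  finally show ?thesis .
qed

section \<open>The fibres of the phase map\<close>

definition phase_map :: "real^3 \<Rightarrow> real \<times> real" where
  "phase_map \<xi> = (\<xi>$1 - \<xi>$2 + \<xi>$3, (\<xi>$1)\<^sup>2 - (\<xi>$2)\<^sup>2 + (\<xi>$3)\<^sup>2)"

lemma borel_measurable_phase_map[measurable]: "phase_map \<in> borel_measurable borel"
  unfolding phase_map_def by measurable

definition sign3 :: "3 \<Rightarrow> real" where
  "sign3 n = (if n = 2 then -1 else 1)"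

lemma phase_map_vec3:
  assumes "a \<noteq> b" "b \<noteq> c" "a \<noteq> c"
  shows "phase_map (vec3 a b c x y z)
    = (sign3 a * x + sign3 b * y + sign3 c * z, sign3 a * x\<^sup>2 + sign3 b * y\<^sup>2 + sign3 c * z\<^sup>2)"
proof -
  have "phase_map \<xi> = (\<Sum>n\<in>UNIV. sign3 n * \<xi>$n, \<Sum>n\<in>UNIV. sign3 n * (\<xi>$n)\<^sup>2)" for \<xi>
    unfolding UNIV_3 by (simp add: phase_map_def sign3_def)
  then show ?thesis
    unfolding UNIV_3_distinct[OF assms] using assms by (simp add: vec3_nth)
qed

lemma phase_map_fibre_le:
  fixes H :: "real \<times> real \<Rightarrow> ennreal"
  assumes [measurable]: "H \<in> borel_measurable borel" and "r > 0" and "i \<noteq> j" "j \<noteq> k" "i \<noteq> k"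
  shows "(\<integral>\<^sup>+x. \<integral>\<^sup>+y. H (phase_map (vec3 k i j z x y)) * indicator {t. r \<le> \<bar>t\<bar>} (x - y) \<partial>lborel \<partial>lborel)
    \<le> ennreal (1 / r) * (\<integral>\<^sup>+p. H p \<partial>lborel)"
proof (cases "sign3 i = sign3 j")
  case True
  with \<open>i \<noteq> j\<close> have "sign3 i = 1" "sign3 j = 1"
    by (auto simp: sign3_def split: if_splits)
  then have "phase_map (vec3 k i j z x y) = (sign3 k * z + (x + y), sign3 k * z\<^sup>2 + (x\<^sup>2 + y\<^sup>2))" for x y
    using assms by (simp add: phase_map_vec3)
  then show ?thesis
    using nn_integral_sum_of_squares_le[of H r] assms by simp
next
  case False
  then have \<sigma>: "sign3 j = - sign3 i" "\<bar>sign3 i\<bar> = 1"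
    by (auto simp: sign3_def split: if_splits)
  then have "phase_map (vec3 k i j z x y)
      = (sign3 k * z + sign3 i * (x - y), sign3 k * z\<^sup>2 + sign3 i * (x\<^sup>2 - y\<^sup>2))" for x y
    using assms by (simp add: phase_map_vec3 algebra_simps)
  then have "(\<integral>\<^sup>+x. \<integral>\<^sup>+y. H (phase_map (vec3 k i j z x y)) * indicator {t. r \<le> \<bar>t\<bar>} (x - y) \<partial>lborel \<partial>lborel)
      \<le> ennreal (1 / (2 * r)) * (\<integral>\<^sup>+p. H p \<partial>lborel)"
    using nn_integral_difference_of_squares_le[of H "sign3 i" r] \<sigma> assms by simp
  also have "\<dots> \<le> ennreal (1 / r) * (\<integral>\<^sup>+p. H p \<partial>lborel)"
    using \<open>r > 0\<close> by (intro mult_right_mono ennreal_leI) (auto simp: frac_le)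
  finally show ?thesis .
qed

section \<open>The Cauchy--Schwarz argument\<close>

lemma borel_measurable_linear:
  fixes l :: "'a::euclidean_space \<Rightarrow> 'b::euclidean_space"
  assumes "linear l"
  shows "l \<in> borel_measurable borel"
  using assms by (intro borel_measurable_continuous_onI linear_continuous_on) (simp add: linear_conv_bounded_linear)

lemma nn_integral_vec3_linear_functional:
  fixes u v w :: "real \<Rightarrow> ennreal" and l :: "real^3 \<Rightarrow> real"
  assumes ijk: "i \<noteq> j" "j \<noteq> k" "i \<noteq> k" and l: "linear l" "l (axis k 1) \<noteq> 0"
    and [measurable]: "u \<in> borel_measurable borel" "v \<in> borel_measurable borel" "w \<in> borel_measurable borel"
  shows "(\<integral>\<^sup>+\<xi>. u (\<xi>$i) * v (\<xi>$j) * w (l \<xi>) \<partial>lborel)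
    = ennreal (1 / \<bar>l (axis k 1)\<bar>) * (\<integral>\<^sup>+x. u x \<partial>lborel) * (\<integral>\<^sup>+y. v y \<partial>lborel) * (\<integral>\<^sup>+t. w t \<partial>lborel)"
proof -
  have [measurable]: "l \<in> borel_measurable borel"
    using l(1) by (rule borel_measurable_linear)
  have l_vec3: "l (vec3 i j k x y z) = (x * l (axis i 1) + y * l (axis j 1)) + l (axis k 1) * z" for x y z
    using l(1) by (simp add: vec3_def linear_add linear_scale)
  have "(\<integral>\<^sup>+\<xi>. u (\<xi>$i) * v (\<xi>$j) * w (l \<xi>) \<partial>lborel)
      = (\<integral>\<^sup>+x. \<integral>\<^sup>+y. \<integral>\<^sup>+z. u x * v y * w (l (vec3 i j k x y z)) \<partial>lborel \<partial>lborel \<partial>lborel)"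
    by (simp add: nn_integral_lborel_vec3[OF ijk] vec3_nth[OF ijk])
  also have "\<dots> = (\<integral>\<^sup>+x. \<integral>\<^sup>+y. u x * v y * (ennreal (1 / \<bar>l (axis k 1)\<bar>) * (\<integral>\<^sup>+t. w t \<partial>lborel)) \<partial>lborel \<partial>lborel)"
    by (simp add: l_vec3 nn_integral_cmult nn_integral_lborel_affine l(2))
  also have "\<dots> = ennreal (1 / \<bar>l (axis k 1)\<bar>) * (\<integral>\<^sup>+x. u x \<partial>lborel) * (\<integral>\<^sup>+y. v y \<partial>lborel) * (\<integral>\<^sup>+t. w t \<partial>lborel)"
    by (simp add: nn_integral_multc nn_integral_cmult mult_ac)
  finally show ?thesis .
qed

lemma nn_integral_vec3_phase_map_le:
  fixes u :: "real \<Rightarrow> ennreal" and H :: "real \<times> real \<Rightarrow> ennreal"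
  assumes ijk: "i \<noteq> j" "j \<noteq> k" "i \<noteq> k" and "r > 0"
    and [measurable]: "u \<in> borel_measurable borel" "H \<in> borel_measurable borel"
  shows "(\<integral>\<^sup>+\<xi>. u (\<xi>$k) * H (phase_map \<xi>) * indicator {\<xi>. r \<le> \<bar>\<xi>$i - \<xi>$j\<bar>} \<xi> \<partial>lborel)
    \<le> ennreal (1 / r) * (\<integral>\<^sup>+z. u z \<partial>lborel) * (\<integral>\<^sup>+p. H p \<partial>lborel)"
proof -
  have kij: "k \<noteq> i" "i \<noteq> j" "k \<noteq> j"
    using ijk by auto
  have "(\<integral>\<^sup>+\<xi>. u (\<xi>$k) * H (phase_map \<xi>) * indicator {\<xi>. r \<le> \<bar>\<xi>$i - \<xi>$j\<bar>} \<xi> \<partial>lborel)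
      = (\<integral>\<^sup>+z. u z * (\<integral>\<^sup>+x. \<integral>\<^sup>+y. H (phase_map (vec3 k i j z x y)) * indicator {t. r \<le> \<bar>t\<bar>} (x - y)
          \<partial>lborel \<partial>lborel) \<partial>lborel)"
    by (simp add: nn_integral_lborel_vec3[OF kij] vec3_nth[OF kij] nn_integral_cmult indicator_def mult.assoc)
  also have "\<dots> \<le> (\<integral>\<^sup>+z. u z * (ennreal (1 / r) * (\<integral>\<^sup>+p. H p \<partial>lborel)) \<partial>lborel)"
    using assms by (intro nn_integral_mono mult_left_mono phase_map_fibre_le) auto
  also have "\<dots> = ennreal (1 / r) * (\<integral>\<^sup>+z. u z \<partial>lborel) * (\<integral>\<^sup>+p. H p \<partial>lborel)"
    by (simp add: nn_integral_multc mult_ac)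
  finally show ?thesis .
qed

lemma trilinear_form_separated_le:
  fixes g :: "3 \<Rightarrow> real \<Rightarrow> ennreal" and G :: "real \<times> real \<Rightarrow> ennreal" and e :: "real \<Rightarrow> ennreal"
    and l :: "real^3 \<Rightarrow> real"
  assumes ijk: "i \<noteq> j" "j \<noteq> k" "i \<noteq> k" and l: "linear l" "l (axis k 1) \<noteq> 0" and "r > 0"
    and [measurable]: "\<And>n. g n \<in> borel_measurable borel" "G \<in> borel_measurable borel" "e \<in> borel_measurable borel"
  shows "(\<integral>\<^sup>+\<xi>. (\<Prod>n\<in>UNIV. g n (\<xi>$n)) * G (phase_map \<xi>) * indicator {\<xi>. r \<le> \<bar>\<xi>$i - \<xi>$j\<bar>} \<xi> * e (l \<xi>) \<partial>lborel)\<^sup>2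
    \<le> ennreal (1 / (\<bar>l (axis k 1)\<bar> * r)) * (\<Prod>n\<in>UNIV. \<integral>\<^sup>+x. (g n x)\<^sup>2 \<partial>lborel)
      * (\<integral>\<^sup>+p. (G p)\<^sup>2 \<partial>lborel) * (\<integral>\<^sup>+t. (e t)\<^sup>2 \<partial>lborel)"
proof -
  have [measurable]: "l \<in> borel_measurable borel"
    using l(1) by (rule borel_measurable_linear)
  define F where "F \<xi> = g i (\<xi>$i) * g j (\<xi>$j) * e (l \<xi>)" for \<xi> :: "real^3"
  define K where "K \<xi> = g k (\<xi>$k) * G (phase_map \<xi>) * indicator {\<xi>. r \<le> \<bar>\<xi>$i - \<xi>$j\<bar>} \<xi>" for \<xi> :: "real^3"
  have "(\<Prod>n\<in>UNIV. g n (\<xi>$n)) * G (phase_map \<xi>) * indicator {\<xi>. r \<le> \<bar>\<xi>$i - \<xi>$j\<bar>} \<xi> * e (l \<xi>) = F \<xi> * K \<xi>" for \<xi>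
    by (simp add: F_def K_def prod_UNIV_3_distinct[OF ijk] mult_ac)
  then have "(\<integral>\<^sup>+\<xi>. (\<Prod>n\<in>UNIV. g n (\<xi>$n)) * G (phase_map \<xi>) * indicator {\<xi>. r \<le> \<bar>\<xi>$i - \<xi>$j\<bar>} \<xi> * e (l \<xi>) \<partial>lborel)\<^sup>2
      \<le> (\<integral>\<^sup>+\<xi>. (F \<xi>)\<^sup>2 \<partial>lborel) * (\<integral>\<^sup>+\<xi>. (K \<xi>)\<^sup>2 \<partial>lborel)"
    by (simp add: Cauchy_Schwarz_nn_integral F_def K_def)
  also have "\<dots> \<le> (ennreal (1 / \<bar>l (axis k 1)\<bar>)
        * (\<integral>\<^sup>+x. (g i x)\<^sup>2 \<partial>lborel) * (\<integral>\<^sup>+x. (g j x)\<^sup>2 \<partial>lborel) * (\<integral>\<^sup>+t. (e t)\<^sup>2 \<partial>lborel))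
      * (ennreal (1 / r) * (\<integral>\<^sup>+x. (g k x)\<^sup>2 \<partial>lborel) * (\<integral>\<^sup>+p. (G p)\<^sup>2 \<partial>lborel))"
  proof (intro mult_mono)
    show "(\<integral>\<^sup>+\<xi>. (F \<xi>)\<^sup>2 \<partial>lborel) \<le> ennreal (1 / \<bar>l (axis k 1)\<bar>)
        * (\<integral>\<^sup>+x. (g i x)\<^sup>2 \<partial>lborel) * (\<integral>\<^sup>+x. (g j x)\<^sup>2 \<partial>lborel) * (\<integral>\<^sup>+t. (e t)\<^sup>2 \<partial>lborel)"
      unfolding F_def power_mult_distrib
      by (rule eq_refl, rule nn_integral_vec3_linear_functional[OF ijk l]) measurable
    have "(K \<xi>)\<^sup>2 = (g k (\<xi>$k))\<^sup>2 * (G (phase_map \<xi>))\<^sup>2 * indicator {\<xi>. r \<le> \<bar>\<xi>$i - \<xi>$j\<bar>} \<xi>" for \<xi>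
      by (simp add: K_def power_mult_distrib split: split_indicator)
    then show "(\<integral>\<^sup>+\<xi>. (K \<xi>)\<^sup>2 \<partial>lborel)
        \<le> ennreal (1 / r) * (\<integral>\<^sup>+x. (g k x)\<^sup>2 \<partial>lborel) * (\<integral>\<^sup>+p. (G p)\<^sup>2 \<partial>lborel)"
      using nn_integral_vec3_phase_map_le[OF ijk \<open>r > 0\<close>, of "\<lambda>x. (g k x)\<^sup>2" "\<lambda>p. (G p)\<^sup>2"]
      by (simp add: measurable_compose[OF _ borel_measurable_power])
  qed simp_all
  also have "\<dots> = ennreal (1 / (\<bar>l (axis k 1)\<bar> * r)) * (\<Prod>n\<in>UNIV. \<integral>\<^sup>+x. (g n x)\<^sup>2 \<partial>lborel)
      * (\<integral>\<^sup>+p. (G p)\<^sup>2 \<partial>lborel) * (\<integral>\<^sup>+t. (e t)\<^sup>2 \<partial>lborel)"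
  proof -
    have "ennreal (1 / (\<bar>l (axis k 1)\<bar> * r)) = ennreal (1 / \<bar>l (axis k 1)\<bar>) * ennreal (1 / r)"
      using \<open>r > 0\<close> by (simp add: ennreal_mult[symmetric] del: ennreal_mult')
    then show ?thesis
      by (simp add: prod_UNIV_3_distinct[OF ijk] mult_ac)
  qed
  finally show ?thesis .
qed

lemma AE_lebesgue_vec_nth_neq:
  assumes "i \<noteq> j"
  shows "AE \<xi> in lebesgue. (\<xi>::real^'n)$i \<noteq> \<xi>$j"
proof -
  have "axis i (1::real) - axis j 1 \<noteq> 0"
    using assms by (simp add: axis_eq_axis)
  then have "{\<xi>::real^'n. (axis i 1 - axis j 1) \<bullet> \<xi> = 0} \<in> null_sets lebesgue"
    using negligible_hyperplane[of "axis i (1::real) - axis j 1" 0] by (simp add: negligible_iff_null_sets)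
  from AE_not_in[OF this] show ?thesis
    by (rule eventually_mono) (simp add: inner_diff_left inner_axis')
qed

lemma nn_integral_eq_0_if_separated_eq_0:
  fixes F :: "real^'n \<Rightarrow> ennreal"
  assumes "i \<noteq> j" and [measurable]: "F \<in> borel_measurable borel"
    and sep: "\<And>r. r > 0 \<Longrightarrow> (\<integral>\<^sup>+\<xi>. F \<xi> * indicator {\<xi>. r \<le> \<bar>\<xi>$i - \<xi>$j\<bar>} \<xi> \<partial>lborel) = 0"
  shows "(\<integral>\<^sup>+\<xi>. F \<xi> \<partial>lborel) = 0"
proof -
  define A where "A n = {\<xi>::real^'n. 1 / Suc n \<le> \<bar>\<xi>$i - \<xi>$j\<bar>}" for n :: nat
  have A_union: "(\<Union>n. A n) = {\<xi>. \<xi>$i \<noteq> \<xi>$j}"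
  proof (intro equalityI subsetI)
    fix \<xi> :: "real^'n" assume "\<xi> \<in> {\<xi>. \<xi>$i \<noteq> \<xi>$j}"
    then obtain n where "1 / Suc n < \<bar>\<xi>$i - \<xi>$j\<bar>"
      using reals_Archimedean[of "\<bar>\<xi>$i - \<xi>$j\<bar>"] by (auto simp: inverse_eq_divide)
    then have "\<xi> \<in> A n"
      by (simp add: A_def)
    then show "\<xi> \<in> (\<Union>n. A n)"
      by blast
  qed (auto simp: A_def)
  have "AE \<xi> in lebesgue. F \<xi> = F \<xi> * indicator (\<Union>n. A n) \<xi>"
    using AE_lebesgue_vec_nth_neq[OF \<open>i \<noteq> j\<close>] by eventually_elim (simp add: A_union)
  then have "(\<integral>\<^sup>+\<xi>. F \<xi> \<partial>lebesgue) = (\<integral>\<^sup>+\<xi>. F \<xi> * indicator (\<Union>n. A n) \<xi> \<partial>lebesgue)"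
    by (rule nn_integral_cong_AE)
  then have "(\<integral>\<^sup>+\<xi>. F \<xi> \<partial>lborel) = (\<integral>\<^sup>+\<xi>. F \<xi> * indicator (\<Union>n. A n) \<xi> \<partial>lborel)"
    by (simp add: nn_integral_completion)
  also have "\<dots> = (SUP n. \<integral>\<^sup>+\<xi>. F \<xi> * indicator (A n) \<xi> \<partial>lborel)"
  proof (rule nn_integral_indicator_incseq_SUP[symmetric])
    have "1 / real (Suc (Suc n)) \<le> 1 / real (Suc n)" for n
      by (rule divide_left_mono) auto
    then show "incseq A"
      unfolding A_def by (intro incseq_SucI) (auto intro: order_trans)
  qed (auto simp: A_def)
  also have "\<dots> = 0"
    using sep by (simp add: A_def)
  finally show ?thesis .
qed

lemma trilinear_form_eq_0_if_norm_eq_0: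
  fixes g :: "3 \<Rightarrow> real \<Rightarrow> ennreal" and G :: "real \<times> real \<Rightarrow> ennreal" and e :: "real \<Rightarrow> ennreal"
    and l :: "real^3 \<Rightarrow> real"
  assumes ijk: "i \<noteq> j" "j \<noteq> k" "i \<noteq> k" and l: "linear l" "l (axis k 1) \<noteq> 0"
    and gGe [measurable]: "\<And>n. g n \<in> borel_measurable borel" "G \<in> borel_measurable borel" "e \<in> borel_measurable borel"
    and norm_eq_0: "(\<Prod>n\<in>UNIV. \<integral>\<^sup>+x. (g n x)\<^sup>2 \<partial>lborel) * (\<integral>\<^sup>+p. (G p)\<^sup>2 \<partial>lborel) * (\<integral>\<^sup>+t. (e t)\<^sup>2 \<partial>lborel) = 0"
  shows "(\<integral>\<^sup>+\<xi>. (\<Prod>n\<in>UNIV. g n (\<xi>$n)) * G (phase_map \<xi>) * e (l \<xi>) \<partial>lborel) = 0"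
proof (rule nn_integral_eq_0_if_separated_eq_0[OF \<open>i \<noteq> j\<close>])
  have [measurable]: "l \<in> borel_measurable borel"
    using l(1) by (rule borel_measurable_linear)
  show "(\<lambda>\<xi>. (\<Prod>n\<in>UNIV. g n (\<xi>$n)) * G (phase_map \<xi>) * e (l \<xi>)) \<in> borel_measurable borel"
    by measurable
  fix r :: real
  assume "r > 0"
  let ?I = "\<integral>\<^sup>+\<xi>. (\<Prod>n\<in>UNIV. g n (\<xi>$n)) * G (phase_map \<xi>) * indicator {\<xi>. r \<le> \<bar>\<xi>$i - \<xi>$j\<bar>} \<xi> * e (l \<xi>) \<partial>lborel"
  have "?I\<^sup>2 \<le> ennreal (1 / (\<bar>l (axis k 1)\<bar> * r))
      * ((\<Prod>n\<in>UNIV. \<integral>\<^sup>+x. (g n x)\<^sup>2 \<partial>lborel) * (\<integral>\<^sup>+p. (G p)\<^sup>2 \<partial>lborel) * (\<integral>\<^sup>+t. (e t)\<^sup>2 \<partial>lborel))"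
    using trilinear_form_separated_le[where g = g, OF ijk l \<open>r > 0\<close> gGe] by (simp only: mult.assoc)
  then have "?I = 0"
    unfolding norm_eq_0 by simp
  then show "(\<integral>\<^sup>+\<xi>. (\<Prod>n\<in>UNIV. g n (\<xi>$n)) * G (phase_map \<xi>) * e (l \<xi>) * indicator {\<xi>. r \<le> \<bar>\<xi>$i - \<xi>$j\<bar>} \<xi> \<partial>lborel) = 0"
    by (simp add: mult_ac)
qed

lemma trilinear_form_borel_le:
  fixes g :: "3 \<Rightarrow> real \<Rightarrow> ennreal" and G :: "real \<times> real \<Rightarrow> ennreal" and e :: "real \<Rightarrow> ennreal"
    and l :: "real^3 \<Rightarrow> real" and S :: "(real^3) set"
  assumes ijk: "i \<noteq> j" "j \<noteq> k" "i \<noteq> k" and l: "linear l" "l (axis k 1) \<noteq> 0"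
    and gGe [measurable]: "\<And>n. g n \<in> borel_measurable borel" "G \<in> borel_measurable borel" "e \<in> borel_measurable borel"
  shows "(\<integral>\<^sup>+\<xi>. (\<Prod>n\<in>UNIV. g n (\<xi>$n)) * G (phase_map \<xi>) * indicator S \<xi> * e (l \<xi>) \<partial>lborel)\<^sup>2
    \<le> ennreal (1 / \<bar>l (axis k 1)\<bar>) * inverse (INF \<xi>\<in>S. ennreal \<bar>\<xi>$i - \<xi>$j\<bar>)
      * ((\<Prod>n\<in>UNIV. \<integral>\<^sup>+x. (g n x)\<^sup>2 \<partial>lborel) * (\<integral>\<^sup>+p. (G p)\<^sup>2 \<partial>lborel) * (\<integral>\<^sup>+t. (e t)\<^sup>2 \<partial>lborel))"
    (is "(?I S)\<^sup>2 \<le> ennreal ?c * inverse ?m * ?P")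
proof -
  have le_INF: "?m \<le> ennreal \<bar>\<xi>$i - \<xi>$j\<bar>" if "\<xi> \<in> S" for \<xi>
    using that by (rule INF_lower)
  consider "?m = top" | r where "?m = ennreal r" "r > 0" | "?m = 0"
    by (cases ?m) (auto simp: le_less)
  then show ?thesis
  proof cases
    case 1
    then have "S = {}"
      using le_INF by (auto simp: top_unique)
    then show ?thesis
      by simp
  next
    case (2 r)
    then have "S \<subseteq> {\<xi>. r \<le> \<bar>\<xi>$i - \<xi>$j\<bar>}"
      using le_INF by (auto simp: ennreal_le_iff)
    then have "(?I S)\<^sup>2 \<le> (?I {\<xi>. r \<le> \<bar>\<xi>$i - \<xi>$j\<bar>})\<^sup>2"
      by (intro power_mono_ennreal nn_integral_mono mult_right_mono mult_left_mono)
        (auto split: split_indicator)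
    also have "\<dots> \<le> ennreal (1 / (\<bar>l (axis k 1)\<bar> * r)) * ?P"
      using trilinear_form_separated_le[where g = g, OF ijk l \<open>r > 0\<close> gGe] by (simp add: mult.assoc)
    also have "ennreal (1 / (\<bar>l (axis k 1)\<bar> * r)) = ennreal ?c * inverse ?m"
      using 2 by (simp add: inverse_ennreal ennreal_mult[symmetric] field_simps del: ennreal_mult')
    finally show ?thesis .
  next
    case 3
    \<comment> \<open>Here \<open>inverse ?m = top\<close>, so only a vanishing norm needs an argument.\<close>
    show ?thesis
    proof (cases "?P = 0")
      case True
      have "?I S \<le> (\<integral>\<^sup>+\<xi>. (\<Prod>n\<in>UNIV. g n (\<xi>$n)) * G (phase_map \<xi>) * e (l \<xi>) \<partial>lborel)"
        by (intro nn_integral_mono) (auto split: split_indicator)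
      then show ?thesis
        by (simp add: trilinear_form_eq_0_if_norm_eq_0[where g = g, OF ijk l gGe True])
    next
      case False
      with 3 l(2) show ?thesis
        by (simp add: ennreal_mult_eq_top_iff)
    qed
  qed
qed

section \<open>Lebesgue measurable data\<close>

lemma esqrt_power2: "(esqrt x)\<^sup>2 = x"
  by (cases x) (auto simp: esqrt_def ennreal_power)

lemma ennreal_power2_le_imp_le:
  fixes x y :: ennreal
  assumes "x\<^sup>2 \<le> y\<^sup>2"
  shows "x \<le> y"
proof (cases y)
  case (real b)
  then have "y\<^sup>2 = ennreal (b\<^sup>2)"
    by (simp add: ennreal_power)
  with assms obtain a where "x = ennreal a" "0 \<le> a"
    by (cases x) (auto simp: top_unique)
  with assms real show ?thesis
    by (auto simp: ennreal_power intro: power2_le_imp_le)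
qed simp

lemma L2norm_power2: "(L2norm f)\<^sup>2 = (\<integral>\<^sup>+x. (f x)\<^sup>2 \<partial>lborel)"
  by (simp add: L2norm_def esqrt_power2 nn_integral_completion)

lemma L2norm_indicator:
  assumes "E \<in> sets lebesgue"
  shows "L2norm (indicator E) = esqrt (emeasure lebesgue E)"
proof -
  have "(\<lambda>x. (indicator E x :: ennreal)\<^sup>2) = indicator E"
    by (auto simp: fun_eq_iff split: split_indicator)
  then show ?thesis
    using assms by (simp add: L2norm_def)
qed

lemma borel_majorant_L2norm:
  fixes f :: "'a::euclidean_space \<Rightarrow> ennreal"
  assumes "f \<in> borel_measurable lebesgue"
  obtains h where "h \<in> borel_measurable borel" "\<And>x. f x \<le> h x" "L2norm h = L2norm f"
proof -
  obtain g where g: "g \<in> borel_measurable lborel" and ae: "AE x in lborel. f x = g x"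
    using completion_ex_borel_measurable[OF assms] by blast
  from ae obtain N where "{x \<in> space lborel. f x \<noteq> g x} \<subseteq> N" "emeasure lborel N = 0" "N \<in> sets lborel"
    by (rule AE_E)
  then have N: "N \<in> null_sets lborel" "\<And>x. x \<notin> N \<Longrightarrow> f x = g x"
    by auto
  define h where "h x = (if x \<in> N then top else g x)" for x
  have "h \<in> borel_measurable borel"
    unfolding h_def using g N(1) by (intro measurable_If_set) auto
  moreover have "f x \<le> h x" for x
    using N(2)[of x] by (auto simp: h_def)
  moreover have "AE x in lebesgue. (h x)\<^sup>2 = (f x)\<^sup>2"
    using AE_completion[OF AE_not_in[OF N(1)]] by eventually_elim (simp add: h_def N(2))
  then have "L2norm h = L2norm f"
    unfolding L2norm_def by (simp add: nn_integral_cong_AE)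
  ultimately show thesis
    using that by blast
qed

lemma trilinear_form_le:
  fixes g :: "3 \<Rightarrow> real \<Rightarrow> ennreal" and G :: "real \<times> real \<Rightarrow> ennreal"
    and l :: "real^3 \<Rightarrow> real" and E :: "real set" and S :: "(real^3) set"
  assumes ijk: "i \<noteq> j" "j \<noteq> k" "i \<noteq> k" and l: "linear l" "l (axis k 1) \<noteq> 0"
    and g_meas: "\<And>n. g n \<in> borel_measurable lebesgue" and G_meas: "G \<in> borel_measurable lebesgue"
    and E_meas: "E \<in> sets lebesgue"
  shows "(\<integral>\<^sup>+\<xi>. (\<Prod>n\<in>UNIV. g n (\<xi>$n)) * G (phase_map \<xi>) * indicator S \<xi> * indicator E (l \<xi>) \<partial>lebesgue)
    \<le> ennreal (1 / sqrt \<bar>l (axis k 1)\<bar>) * (\<Prod>n\<in>UNIV. L2norm (g n)) * L2norm G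
      * esqrt (emeasure lebesgue E) * inverse (esqrt (INF \<xi>\<in>S. ennreal \<bar>\<xi>$i - \<xi>$j\<bar>))"
    (is "?I \<le> ?R")
proof -
  have "\<forall>n. \<exists>h. h \<in> borel_measurable borel \<and> (\<forall>x. g n x \<le> h x) \<and> L2norm h = L2norm (g n)"
    using borel_majorant_L2norm[OF g_meas] by metis
  then obtain h where [measurable]: "\<And>n. h n \<in> borel_measurable borel"
    and h: "\<And>n x. g n x \<le> h n x" "\<And>n. L2norm (h n) = L2norm (g n)"
    by metis
  obtain G' where [measurable]: "G' \<in> borel_measurable borel" and G': "\<And>p. G p \<le> G' p" "L2norm G' = L2norm G"
    using borel_majorant_L2norm[OF G_meas] by blast
  obtain e where [measurable]: "e \<in> borel_measurable borel"
    and e: "\<And>t. indicator E t \<le> e t" "L2norm e = esqrt (emeasure lebesgue E)"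
    using borel_majorant_L2norm[of "indicator E"] E_meas by (auto simp: L2norm_indicator)
  let ?J = "\<integral>\<^sup>+\<xi>. (\<Prod>n\<in>UNIV. h n (\<xi>$n)) * G' (phase_map \<xi>) * indicator S \<xi> * e (l \<xi>) \<partial>lborel"
  have "?I \<le> (\<integral>\<^sup>+\<xi>. (\<Prod>n\<in>UNIV. h n (\<xi>$n)) * G' (phase_map \<xi>) * indicator S \<xi> * e (l \<xi>) \<partial>lebesgue)"
    using h(1) G'(1) e(1) by (intro nn_integral_mono mult_mono prod_mono_ennreal) auto
  also have "\<dots> = ?J"
    by (rule nn_integral_completion)
  also have "?J \<le> ?R"
  proof (rule ennreal_power2_le_imp_le)
    have "?J\<^sup>2 \<le> ennreal (1 / \<bar>l (axis k 1)\<bar>) * inverse (INF \<xi>\<in>S. ennreal \<bar>\<xi>$i - \<xi>$j\<bar>)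
        * ((\<Prod>n\<in>UNIV. (L2norm (h n))\<^sup>2) * (L2norm G')\<^sup>2 * (L2norm e)\<^sup>2)"
      unfolding L2norm_power2 by (rule trilinear_form_borel_le[OF ijk l]) measurable
    also have "\<dots> = ?R\<^sup>2"
      using l(2) by (simp add: h(2) G'(2) e(2) power_mult_distrib prod_power_distrib esqrt_power2
          ennreal_inverse_power[symmetric] ennreal_power power_divide mult_ac)
    finally show "?J\<^sup>2 \<le> ?R\<^sup>2" .
  qed
  finally show ?thesis .
qed

theorem lemma4p4:
  fixes i j k :: 3 and l :: "real^3 \<Rightarrow> real"
  assumes "i \<noteq> j" "j \<noteq> k" "i \<noteq> k"
    and "linear l" and "l (axis k 1) \<noteq> 0"
  shows "\<exists>C::real. \<forall>(G :: real \<times> real \<Rightarrow> ennreal) (g1 :: real \<Rightarrow> ennreal) g2 g3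
      (E :: real set) (S :: (real^3) set).
      G \<in> borel_measurable lebesgue \<longrightarrow> g1 \<in> borel_measurable lebesgue \<longrightarrow>
      g2 \<in> borel_measurable lebesgue \<longrightarrow> g3 \<in> borel_measurable lebesgue \<longrightarrow>
      E \<in> sets lebesgue \<longrightarrow> S \<in> sets lebesgue \<longrightarrow>
      (\<integral>\<^sup>+ \<xi>. g1 (\<xi>$1) * g2 (\<xi>$2) * g3 (\<xi>$3)
          * G (\<xi>$1 - \<xi>$2 + \<xi>$3, (\<xi>$1)\<^sup>2 - (\<xi>$2)\<^sup>2 + (\<xi>$3)\<^sup>2)
          * indicator S \<xi> * indicator E (l \<xi>) \<partial>lebesgue)
      \<le> ennreal C * L2norm G * L2norm g1 * L2norm g2 * L2norm g3
          * esqrt (emeasure lebesgue E)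
          * inverse (esqrt (INF \<xi>\<in>S. ennreal \<bar>\<xi>$i - \<xi>$j\<bar>))"
proof (intro exI[of _ "1 / sqrt \<bar>l (axis k 1)\<bar>"] allI impI, goal_cases)
  case (1 G g1 g2 g3 E S)
  define g where "g n = (if n = 1 then g1 else if n = 2 then g2 else g3)" for n :: 3
  have "g n \<in> borel_measurable lebesgue" for n
    using 1 by (simp add: g_def)
  from trilinear_form_le[where g = g and S = S, OF assms this \<open>G \<in> _\<close> \<open>E \<in> _\<close>] show ?case
    unfolding UNIV_3 by (simp add: g_def phase_map_def mult_ac)
qed

end
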